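(* In the setting described in the context, for every $j\ne i^*$ and every collection of nonnegative numbers $(G_i(\theta_b))_{i\ne i^b}$, $$\min_{\mathbf M\in\mathcal A_j}\sum_{(i,\theta_b)\in I(\mathbf M)}G_i(\theta_b)=\min_{\mathbf M\in\widetilde{\mathcal A}_j}\sum_{(i,\theta_b)\in I(\mathbf M)}G_i(\theta_b).$$
   Context: There are $k\ge2$ solutions and parameter values $\theta_1,\dots,\theta_B$ with probabilities $p_b\ge0$, $\sum_bp_b=1$. For each $b$ a unique conditional optimum $i^b\in\{1,\dots,k\}$ is given, and $i^*=\arg\max_i\sum_bp_b\mathbf 1\{i=i^b\}$ is assumed unique. Let $\mathcal M=\{\mathbf M\in\{0,1\}^{k\times B}:\mathbf M^\top\mathbf 1_k=\mathbf 1_B\}$ with entries $m_{i,b}$; $d_j(\mathbf M)=\sum_bp_bm_{i^*,b}-\sum_bp_bm_{j,b}$; $d_j=\sum_bp_b\mathbf 1\{i^*=i^b\}-\sum_bp_b\mathbf 1\{j=i^b\}$; $I(\mathbf M)=\{(i,\theta_b):m_{i,b}=1,i\ne i^b\}$; $\mathcal A_j=\{\mathbf M\in\mathcal M:d_j(\mathbf M)\le0\}$. Let $\Xi=\{(i,\theta_b):i\ne i^*,i\ne i^b\}$ and $\Xi^{\mathrm{adv}}=\{(i^*,\theta_b):i^b\ne i^*\}$. For $(i,\theta_b)\in\Xi\cup\Xi^{\mathrm{adv}}$ let $v_j[(i,\theta_b)]=p_b(\mathbf 1\{j=i\}-\mathbf 1\{j=i^b\}-\mathbf 1\{i^*=i\}+\mathbf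 1\{i^*=i^b\})$ and $v_j[(i,\theta_b)]^+=\max\{v_j[(i,\theta_b)],0\}$. Define $\widetilde{\mathcal A}_j=\{\mathbf M\in\mathcal M:d_j-\sum_{(i,\theta_b)\in\Xi\cup\Xi^{\mathrm{adv}}}v_j[(i,\theta_b)]^+m_{i,b}\le0\}$. *)

theory Defs
  imports Complex_Main
begin

text \<open>Solutions are indexed by 0,...,k-1 and parameter values theta_b by b in 0,...,B-1.
A matrix M is a function nat => nat => real, with 0/1 entries for i<k, b<B,
zero outside that range, and every column summing to 1.\<close>

definition Mset :: "nat \<Rightarrow> nat \<Rightarrow> (nat \<Rightarrow> nat \<Rightarrow> real) set" where
  "Mset k B = {M. (\<forall>i b. M i b = 0 \<or> M i b = 1)
                 \<and> (\<forall>i b. (k \<le> i \<or> B \<le> b) \<longrightarrow> M i b = 0)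
                 \<and> (\<forall>b<B. (\<Sum>i<k. M i b) = 1)}"

definition ind :: "bool \<Rightarrow> real" where
  "ind P = (if P then 1 else 0)"

definition dM :: "nat \<Rightarrow> (nat \<Rightarrow> real) \<Rightarrow> nat \<Rightarrow> nat \<Rightarrow> (nat \<Rightarrow> nat \<Rightarrow> real) \<Rightarrow> real" where
  "dM B p istar j M = (\<Sum>b<B. p b * M istar b) - (\<Sum>b<B. p b * M j b)"

definition d0 :: "nat \<Rightarrow> (nat \<Rightarrow> real) \<Rightarrow> (nat \<Rightarrow> nat) \<Rightarrow> nat \<Rightarrow> nat \<Rightarrow> real" where
  "d0 B p ib istar j = (\<Sum>b<B. p b * ind (istar = ib b)) - (\<Sum>b<B. p b * ind (j = ib b))"

definition Iset :: "nat \<Rightarrow> nat \<Rightarrow> (nat \<Rightarrow> nat) \<Rightarrow> (nat \<Rightarrow> nat \<Rightarrow> real) \<Rightarrow> (nat \<times> nat) set" where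
  "Iset k B ib M = {(i, b). i < k \<and> b < B \<and> M i b = 1 \<and> i \<noteq> ib b}"

definition Aset :: "nat \<Rightarrow> nat \<Rightarrow> (nat \<Rightarrow> real) \<Rightarrow> nat \<Rightarrow> nat \<Rightarrow> (nat \<Rightarrow> nat \<Rightarrow> real) set" where
  "Aset k B p istar j = {M \<in> Mset k B. dM B p istar j M \<le> 0}"

definition Xi :: "nat \<Rightarrow> nat \<Rightarrow> (nat \<Rightarrow> nat) \<Rightarrow> nat \<Rightarrow> (nat \<times> nat) set" where
  "Xi k B ib istar = {(i, b). i < k \<and> b < B \<and> i \<noteq> istar \<and> i \<noteq> ib b}"

definition Xi_adv :: "nat \<Rightarrow> (nat \<Rightarrow> nat) \<Rightarrow> nat \<Rightarrow> (nat \<times> nat) set" where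
  "Xi_adv B ib istar = {(i, b). i = istar \<and> b < B \<and> ib b \<noteq> istar}"

definition vj :: "(nat \<Rightarrow> real) \<Rightarrow> (nat \<Rightarrow> nat) \<Rightarrow> nat \<Rightarrow> nat \<Rightarrow> nat \<times> nat \<Rightarrow> real" where
  "vj p ib istar j ib_pair = (case ib_pair of (i, b) \<Rightarrow>
      p b * (ind (j = i) - ind (j = ib b) - ind (istar = i) + ind (istar = ib b)))"

definition Atilde :: "nat \<Rightarrow> nat \<Rightarrow> (nat \<Rightarrow> real) \<Rightarrow> (nat \<Rightarrow> nat) \<Rightarrow> nat \<Rightarrow> nat \<Rightarrow> (nat \<Rightarrow> nat \<Rightarrow> real) set" where
  "Atilde k B p ib istar j = {M \<in> Mset k B.
     d0 B p ib istar j
       - (\<Sum>(i, b) \<in> Xi k B ib istar \<union> Xi_adv B ib istar. max (vj p ib istar j (i, b)) 0 * M i b) \<le> 0}"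

definition cost :: "nat \<Rightarrow> nat \<Rightarrow> (nat \<Rightarrow> nat) \<Rightarrow> (nat \<Rightarrow> nat \<Rightarrow> real) \<Rightarrow> (nat \<Rightarrow> nat \<Rightarrow> real) \<Rightarrow> real" where
  "cost k B ib G M = (\<Sum>(i, b) \<in> Iset k B ib M. G i b)"

end

theory Submission
  imports Defs
begin

(* Writing v for v_j, every M in \<M> satisfies d_j(M) = d_j - \<Sum>_{I(M)} v.  Since v \<le> v\<^sup>+, the
   set A_j is contained in A~_j, which gives one inequality between the minima.  Conversely, a
   matrix in A~_j can be repaired by sending every column whose incorrect entry has negative v
   back to its conditional optimum: this only removes incorrect entries, so the cost does not grow
   (G \<ge> 0), and the remaining ones satisfy \<Sum>_{I(M')} v = \<Sum>_{I(M)} v\<^sup>+, so the repaired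
   matrix lies in A_j.  Nonemptiness of A_j is witnessed by always choosing j. *)

lemma Mset_entry_cases: "M \<in> Mset k B \<Longrightarrow> M i b = 0 \<or> M i b = 1"
  unfolding Mset_def by blast

lemma Mset_column_sum: "M \<in> Mset k B \<Longrightarrow> b < B \<Longrightarrow> (\<Sum>i<k. M i b) = 1"
  unfolding Mset_def by blast

lemma Mset_column_unique:
  assumes M: "M \<in> Mset k B" and "b < B" "i < k" "i' < k" "M i b = 1" "M i' b = 1"
  shows "i = i'"
proof (rule ccontr)
  assume "i \<noteq> i'"
  have "0 \<le> M x b" for x
    using Mset_entry_cases[OF M, of x b] by auto
  then have "(\<Sum>x\<in>{i, i'}. M x b) \<le> (\<Sum>x<k. M x b)"
    by (intro sum_mono2) (use assms in auto)
  also have "\<dots> = 1" using Mset_column_sum[OF M \<open>b < B\<close>] .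
  finally show False using \<open>i \<noteq> i'\<close> assms by simp
qed

lemma Iset_subset: "Iset k B ib M \<subseteq> {..<k} \<times> {..<B}"
  unfolding Iset_def by auto

lemma finite_Iset: "finite (Iset k B ib M)"
  using finite_subset[OF Iset_subset] by blast

lemma sum_Iset_eq_sum_entries:
  assumes M: "M \<in> Mset k B" and vanish: "\<And>b. f (ib b) b = 0"
  shows "(\<Sum>(i, b) \<in> Iset k B ib M. f i b) = (\<Sum>b<B. \<Sum>i<k. M i b * f i b)"
proof -
  have "(\<Sum>(i, b) \<in> Iset k B ib M. f i b) = (\<Sum>(i, b) \<in> {..<k} \<times> {..<B}. M i b * f i b)"
  proof (rule sum.mono_neutral_cong_left[OF _ Iset_subset])
    show "\<forall>x \<in> {..<k} \<times> {..<B} - Iset k B ib M. (case x of (i, b) \<Rightarrow> M i b * f i b) = 0"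
      using Mset_entry_cases[OF M] vanish by (fastforce simp: Iset_def)
  qed (auto simp: Iset_def)
  also have "\<dots> = (\<Sum>i<k. \<Sum>b<B. M i b * f i b)"
    by (simp add: sum.cartesian_product)
  finally show ?thesis by (simp add: sum.swap[of _ "{..<k}"])
qed

lemma vj_conditional_optimum [simp]: "vj p ib istar j (ib b, b) = 0"
  unfolding vj_def by simp

lemma sum_column_vj:
  assumes M: "M \<in> Mset k B" and b: "b < B" and istar: "istar < k" and j: "j < k"
  shows "(\<Sum>i<k. M i b * vj p ib istar j (i, b))
       = p b * (M j b - ind (j = ib b) - M istar b + ind (istar = ib b))"
proof -
  have row: "(\<Sum>i<k. M i b * ind (c = i)) = M c b" if "c < k" for c
  proof -
    have "(\<Sum>i<k. M i b * ind (c = i)) = (\<Sum>i<k. if c = i then M i b else 0)"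
      by (rule sum.cong) (auto simp: ind_def)
    then show ?thesis
      using that by simp
  qed
  have column: "(\<Sum>i<k. M i b * x) = x" for x
    using Mset_column_sum[OF M b] by (simp add: sum_distrib_right[symmetric])
  show ?thesis
    unfolding vj_def
    by (simp add: algebra_simps sum.distrib sum_subtractf sum_distrib_left[symmetric]
        row[OF istar] row[OF j] column)
qed

lemma dM_eq_d0_minus_sum_vj:
  assumes M: "M \<in> Mset k B" and istar: "istar < k" and j: "j < k"
  shows "dM B p istar j M = d0 B p ib istar j - (\<Sum>x \<in> Iset k B ib M. vj p ib istar j x)"
proof -
  have "dM B p istar j M - d0 B p ib istar j
      = - (\<Sum>b<B. p b * (M j b - ind (j = ib b) - M istar b + ind (istar = ib b)))"
    unfolding dM_def d0_def by (simp add: algebra_simps sum_subtractf sum.distrib)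
  also have "\<dots> = - (\<Sum>b<B. \<Sum>i<k. M i b * vj p ib istar j (i, b))"
    using sum_column_vj[OF M _ istar j] by simp
  also have "\<dots> = - (\<Sum>x \<in> Iset k B ib M. vj p ib istar j x)"
    using sum_Iset_eq_sum_entries[OF M, of "\<lambda>i b. vj p ib istar j (i, b)"] by simp
  finally show ?thesis by simp
qed

lemma Aset_eq:
  assumes "istar < k" "j < k"
  shows "Aset k B p istar j
       = {M \<in> Mset k B. d0 B p ib istar j - (\<Sum>x \<in> Iset k B ib M. vj p ib istar j x) \<le> 0}"
proof -
  have "dM B p istar j M = d0 B p ib istar j - (\<Sum>x \<in> Iset k B ib M. vj p ib istar j x)"
    if "M \<in> Mset k B" for M
    using dM_eq_d0_minus_sum_vj[OF that assms] .
  then show ?thesis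
    unfolding Aset_def by auto
qed

lemma Xi_Un_Xi_adv:
  "istar < k \<Longrightarrow> Xi k B ib istar \<union> Xi_adv B ib istar = {(i, b). i < k \<and> b < B \<and> i \<noteq> ib b}"
  unfolding Xi_def Xi_adv_def by auto

lemma Atilde_eq:
  assumes istar: "istar < k"
  shows "Atilde k B p ib istar j
       = {M \<in> Mset k B. d0 B p ib istar j - (\<Sum>x \<in> Iset k B ib M. max (vj p ib istar j x) 0) \<le> 0}"
proof -
  have "(\<Sum>(i, b) \<in> Xi k B ib istar \<union> Xi_adv B ib istar. max (vj p ib istar j (i, b)) 0 * M i b)
      = (\<Sum>x \<in> Iset k B ib M. max (vj p ib istar j x) 0)" if M: "M \<in> Mset k B" for M
    unfolding Xi_Un_Xi_adv[OF istar]
  proof (rule sum.mono_neutral_cong_right)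
    show "finite {(i, b). i < k \<and> b < B \<and> i \<noteq> ib b}"
      by (rule finite_subset[of _ "{..<k} \<times> {..<B}"]) auto
    show "\<forall>x \<in> {(i, b). i < k \<and> b < B \<and> i \<noteq> ib b} - Iset k B ib M.
            (case x of (i, b) \<Rightarrow> max (vj p ib istar j (i, b)) 0 * M i b) = 0"
      using Mset_entry_cases[OF M] by (fastforce simp: Iset_def)
  qed (auto simp: Iset_def)
  then show ?thesis
    unfolding Atilde_def by auto
qed

lemma Aset_subset_Atilde:
  assumes "istar < k" "j < k"
  shows "Aset k B p istar j \<subseteq> Atilde k B p ib istar j"
proof -
  have "(\<Sum>x \<in> Iset k B ib M. vj p ib istar j x) \<le> (\<Sum>x \<in> Iset k B ib M. max (vj p ib istar j x) 0)"
    for M by (rule sum_mono) simp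
  then show ?thesis
    unfolding Aset_eq[OF assms, of B p ib] Atilde_eq[OF assms(1)]
    by (fastforce intro: order_trans)
qed

lemma Mset_restrict_Iset:
  assumes M: "M \<in> Mset k B" and ib: "\<forall>b<B. ib b < k"
  obtains M' where "M' \<in> Mset k B" and "Iset k B ib M' = {x \<in> Iset k B ib M. P x}"
proof
  define bad where "bad b \<longleftrightarrow> (\<exists>i. (i, b) \<in> Iset k B ib M \<and> \<not> P (i, b))" for b
  define M' where "M' i b = (if bad b then ind (i = ib b) else M i b)" for i b
  have bad_range: "bad b \<Longrightarrow> b < B" for b
    unfolding bad_def Iset_def by auto
  show "M' \<in> Mset k B"
    unfolding Mset_def
  proof (intro CollectI conjI allI impI)
    show "M' i b = 0 \<or> M' i b = 1" for i b
      using Mset_entry_cases[OF M] by (simp add: M'_def ind_def)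
    show "M' i b = 0" if "k \<le> i \<or> B \<le> b" for i b
      using that M ib bad_range[of b] unfolding Mset_def M'_def ind_def by auto
    show "(\<Sum>i<k. M' i b) = 1" if "b < B" for b
      using Mset_column_sum[OF M that] ib that by (cases "bad b") (simp_all add: M'_def ind_def)
  qed
  have not_bad: "\<not> bad b" if "(i, b) \<in> Iset k B ib M" "P (i, b)" for i b
    using that Mset_column_unique[OF M] unfolding bad_def Iset_def by blast
  show "Iset k B ib M' = {x \<in> Iset k B ib M. P x}"
    using not_bad unfolding Iset_def M'_def bad_def ind_def by auto
qed

lemma Atilde_dominated_by_Aset:
  assumes M: "M \<in> Atilde k B p ib istar j"
    and ib: "\<forall>b<B. ib b < k" and istar: "istar < k" and j: "j < k"
  obtains M' where "M' \<in> Aset k B p istar j" and "Iset k B ib M' \<subseteq> Iset k B ib M"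
proof -
  let ?v = "vj p ib istar j"
  have MM: "M \<in> Mset k B"
    using M unfolding Atilde_def by blast
  obtain M' where M': "M' \<in> Mset k B" and I': "Iset k B ib M' = {x \<in> Iset k B ib M. ?v x \<ge> 0}"
    by (rule Mset_restrict_Iset[OF MM ib])
  have "(\<Sum>x \<in> Iset k B ib M'. ?v x) = (\<Sum>x \<in> Iset k B ib M. max (?v x) 0)"
    unfolding I' by (rule sum.mono_neutral_cong_left) (auto simp: finite_Iset)
  moreover have "d0 B p ib istar j - (\<Sum>x \<in> Iset k B ib M. max (?v x) 0) \<le> 0"
    using M unfolding Atilde_eq[OF istar] by blast
  ultimately have "M' \<in> Aset k B p istar j"
    unfolding Aset_eq[OF istar j, of B p ib] using M' by simp
  then show ?thesis
    by (rule that) (use I' in blast)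
qed

lemma cost_mono:
  assumes "Iset k B ib M' \<subseteq> Iset k B ib M" and "\<forall>i<k. \<forall>b<B. i \<noteq> ib b \<longrightarrow> G i b \<ge> 0"
  shows "cost k B ib G M' \<le> cost k B ib G M"
  unfolding cost_def
  by (rule sum_mono2[OF finite_Iset assms(1)]) (use assms(2) in \<open>auto simp: Iset_def\<close>)

lemma finite_cost_image: "finite (cost k B ib G ` X)"
proof (rule finite_subset)
  show "cost k B ib G ` X \<subseteq> (\<lambda>S. \<Sum>(i, b) \<in> S. G i b) ` Pow ({..<k} \<times> {..<B})"
    unfolding cost_def using Iset_subset by blast
qed simp

lemma always_j_in_Aset:
  assumes "j < k" "j \<noteq> istar" "(\<Sum>b<B. p b) = 1"
  shows "(\<lambda>i b. if b < B \<and> i = j then 1 else 0) \<in> Aset k B p istar j"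
proof -
  have "(\<lambda>i b. if b < B \<and> i = j then 1 else 0) \<in> Mset k B"
    using assms(1) unfolding Mset_def by auto
  moreover have "dM B p istar j (\<lambda>i b. if b < B \<and> i = j then 1 else 0) = - 1"
    unfolding dM_def using assms(2,3) by simp
  ultimately show ?thesis
    unfolding Aset_def by simp
qed

lemma Min_image_eq_if_dominated:
  fixes f :: "'a \<Rightarrow> 'b::linorder"
  assumes "finite (f ` T)" "A \<subseteq> T" "A \<noteq> {}" "\<And>x. x \<in> T \<Longrightarrow> \<exists>y \<in> A. f y \<le> f x"
  shows "Min (f ` A) = Min (f ` T)"
proof (rule antisym)
  have "finite (f ` A)" "f ` T \<noteq> {}"
    using assms(1-3) finite_subset[of "f ` A" "f ` T"] by auto
  obtain x where "x \<in> T" "Min (f ` T) = f x"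
    using Min_in[OF assms(1) \<open>f ` T \<noteq> {}\<close>] by blast
  with assms(4) \<open>finite (f ` A)\<close> show "Min (f ` A) \<le> Min (f ` T)"
    by (metis Min_le image_eqI order_trans)
  show "Min (f ` T) \<le> Min (f ` A)"
    using Min_antimono[OF image_mono[OF assms(2)]] assms(1,3) by blast
qed

theorem mainTheorem8:
  fixes k B :: nat and p :: "nat \<Rightarrow> real" and ib :: "nat \<Rightarrow> nat" and istar j :: nat
    and G :: "nat \<Rightarrow> nat \<Rightarrow> real"
  assumes "k \<ge> 2"
    and "\<forall>b<B. p b \<ge> 0"
    and "(\<Sum>b<B. p b) = 1"
    and "\<forall>b<B. ib b < k"
    and "istar < k"
    and "\<forall>i<k. i \<noteq> istar \<longrightarrow>
           (\<Sum>b<B. p b * ind (i = ib b)) < (\<Sum>b<B. p b * ind (istar = ib b))"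
    and "j < k" and "j \<noteq> istar"
    and "\<forall>i<k. \<forall>b<B. i \<noteq> ib b \<longrightarrow> G i b \<ge> 0"
  shows "Min ((cost k B ib G) ` Aset k B p istar j)
           = Min ((cost k B ib G) ` Atilde k B p ib istar j)"
proof (rule Min_image_eq_if_dominated[OF finite_cost_image])
  show "Aset k B p istar j \<subseteq> Atilde k B p ib istar j"
    using Aset_subset_Atilde[OF assms(5,7)] .
  show "Aset k B p istar j \<noteq> {}"
    using always_j_in_Aset[OF assms(7,8,3)] by blast
  show "\<exists>M' \<in> Aset k B p istar j. cost k B ib G M' \<le> cost k B ib G M"
    if "M \<in> Atilde k B p ib istar j" for M
    using Atilde_dominated_by_Aset[OF that assms(4,5,7)] cost_mono[OF _ assms(9)] by metis
qed

end
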